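(* For every $2$-colorable oriented graph $H$ there is a bipartite tournament that forces $H$.
   Context: An oriented graph is a directed graph without loops with at most one edge between any two distinct vertices; it is $2$-colorable if its vertex set can be partitioned into $2$ sets each inducing an acyclic digraph. A bipartite tournament $F=(M\cup N,E)$ is an orientation of a complete bipartite graph with sides $M,N$. A completion of $F$ is any tournament on $V(F)$ agreeing with $F$ on the edges between $M$ and $N$. $F$ forces $H$ if every completion of $F$ contains a (not necessarily induced) copy of $H$. *)

theory Defs
  imports Main
begin

definition oriented_graph :: "'a set \<Rightarrow> ('a \<times> 'a) set \<Rightarrow> bool" where
  "oriented_graph V E \<longleftrightarrow> finite V \<and> E \<subseteq> V \<times> V \<and>
     (\<forall>v. (v, v) \<notin> E) \<and> (\<forall>u v. (u, v) \<in> E \<longrightarrow> (v, u) \<notin> E)"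

definition two_colorable :: "'a set \<Rightarrow> ('a \<times> 'a) set \<Rightarrow> bool" where
  "two_colorable V E \<longleftrightarrow> (\<exists>A B. A \<union> B = V \<and> A \<inter> B = {} \<and>
     acyclic (E \<inter> (A \<times> A)) \<and> acyclic (E \<inter> (B \<times> B)))"

definition tournament :: "'a set \<Rightarrow> ('a \<times> 'a) set \<Rightarrow> bool" where
  "tournament V E \<longleftrightarrow> oriented_graph V E \<and>
     (\<forall>u\<in>V. \<forall>v\<in>V. u \<noteq> v \<longrightarrow> (u, v) \<in> E \<or> (v, u) \<in> E)"

definition bipartite_tournament :: "'a set \<Rightarrow> 'a set \<Rightarrow> ('a \<times> 'a) set \<Rightarrow> bool" where
  "bipartite_tournament M N E \<longleftrightarrow> finite M \<and> finite N \<and> M \<inter> N = {} \<and>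
     E \<subseteq> (M \<times> N) \<union> (N \<times> M) \<and>
     (\<forall>u\<in>M. \<forall>v\<in>N. ((u, v) \<in> E \<longleftrightarrow> (v, u) \<notin> E))"

definition completion :: "'a set \<Rightarrow> 'a set \<Rightarrow> ('a \<times> 'a) set \<Rightarrow> ('a \<times> 'a) set \<Rightarrow> bool" where
  "completion M N E T \<longleftrightarrow> tournament (M \<union> N) T \<and>
     T \<inter> ((M \<times> N) \<union> (N \<times> M)) = E"

text \<open>(V, T) contains a (not necessarily induced) copy of (VH, EH).\<close>
definition contains_copy :: "'b set \<Rightarrow> ('b \<times> 'b) set \<Rightarrow> 'a set \<Rightarrow> ('a \<times> 'a) set \<Rightarrow> bool" where
  "contains_copy V T VH EH \<longleftrightarrow> (\<exists>f. inj_on f VH \<and> f ` VH \<subseteq> V \<and>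
     (\<forall>(u, v)\<in>EH. (f u, f v) \<in> T))"

definition forces :: "'b set \<Rightarrow> 'b set \<Rightarrow> ('b \<times> 'b) set \<Rightarrow> 'a set \<Rightarrow> ('a \<times> 'a) set \<Rightarrow> bool" where
  "forces M N E VH EH \<longleftrightarrow> (\<forall>T. completion M N E T \<longrightarrow> contains_copy (M \<union> N) T VH EH)"

end

(*
  Split H into acyclic parts A and B and list them in topological orders a_1, ..., a_s and
  b_1, ..., b_t. Then H embeds into every tournament containing transitive chains
  x_1 -> ... -> x_s and y_1 -> ... -> y_t in which x_i -> y_k if a_i b_k is an edge of H and
  y_k -> x_i otherwise. To force such chains, cut M and N into p blocks of sizes 2^s and 2^t:
  in every completion each block contains a transitive chain of the required length. For a fixed
  choice of one chain per block, at most a fraction (1 - 2^(-st))^(p^2) of the orientations of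
  M x N misses the cross pattern on all p^2 pairs of blocks, and there are at most 2^((s^2+t^2) p)
  such choices; for p = 2^(st) (s^2 + t^2 + 1) the union bound leaves an orientation that meets
  the pattern for every choice.
*)
theory Submission
  imports Defs "HOL-Library.FuncSet" "HOL-Library.Disjoint_Sets"
begin

section \<open>Transitive chains and embeddings\<close>

definition transitive_chain :: "('a \<times> 'a) set \<Rightarrow> 'a list \<Rightarrow> bool" where
  "transitive_chain T xs \<longleftrightarrow> distinct xs \<and> sorted_wrt (\<lambda>x y. (x, y) \<in> T) xs"

lemma exists_transitive_chain:
  assumes "finite S" "2 ^ k \<le> card S"
    and "\<And>u v. u \<in> S \<Longrightarrow> v \<in> S \<Longrightarrow> u \<noteq> v \<Longrightarrow> (u, v) \<in> T \<or> (v, u) \<in> T"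
  shows "\<exists>xs. transitive_chain T xs \<and> set xs \<subseteq> S \<and> length xs = k"
  using assms
proof (induction k arbitrary: S)
  case 0
  show ?case by (intro exI[of _ "[]"]) (simp add: transitive_chain_def)
next
  case (Suc k)
  then obtain v where v: "v \<in> S" by fastforce
  define Out where "Out = {u \<in> S - {v}. (v, u) \<in> T}"
  define In where "In = {u \<in> S - {v}. (u, v) \<in> T}"
  have "Out \<union> In = S - {v}" using Suc.prems(3) v unfolding Out_def In_def by blast
  then have "card S - 1 \<le> card Out + card In"
    using card_Un_le[of Out In] v Suc.prems(1) by simp
  then have "2 ^ k \<le> card Out \<or> 2 ^ k \<le> card In" using Suc.prems(2) by auto
  then show ?case
  proof
    assume "2 ^ k \<le> card Out"
    then obtain xs where xs: "transitive_chain T xs" "set xs \<subseteq> Out" "length xs = k"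
      using Suc.IH[of Out] Suc.prems unfolding Out_def by auto
    show ?case using xs v unfolding Out_def transitive_chain_def
      by (intro exI[of _ "v # xs"]) auto
  next
    assume "2 ^ k \<le> card In"
    then obtain xs where xs: "transitive_chain T xs" "set xs \<subseteq> In" "length xs = k"
      using Suc.IH[of In] Suc.prems unfolding In_def by auto
    show ?case using xs v unfolding In_def transitive_chain_def
      by (intro exI[of _ "xs @ [v]"]) (auto simp: sorted_wrt_append)
  qed
qed

lemma acyclic_topological_order:
  assumes "finite A" "acyclic R"
  shows "\<exists>as. distinct as \<and> set as = A \<and> sorted_wrt (\<lambda>u v. (v, u) \<notin> R) as"
  using assms(1)
proof (induction "card A" arbitrary: A)
  case 0
  then show ?case by (intro exI[of _ "[]"]) simp
next
  case (Suc n)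
  have "wf (R \<inter> A \<times> A)"
    using Suc.prems assms(2) by (intro finite_acyclic_wf) (auto intro: acyclic_subset)
  moreover have "A \<noteq> {}" using Suc.hyps(2) by auto
  then obtain x where "x \<in> A" by blast
  ultimately obtain z where z: "z \<in> A" "\<And>y. (y, z) \<in> R \<inter> A \<times> A \<Longrightarrow> y \<notin> A"
    by (rule wfE_min) blast
  have "n = card (A - {z})" using Suc.hyps(2) Suc.prems z(1) by simp
  moreover have "finite (A - {z})" using Suc.prems by simp
  ultimately have "\<exists>as. distinct as \<and> set as = A - {z} \<and> sorted_wrt (\<lambda>u v. (v, u) \<notin> R) as"
    by (rule Suc.hyps(1))
  then obtain as where as: "distinct as" "set as = A - {z}" "sorted_wrt (\<lambda>u v. (v, u) \<notin> R) as"
    by (elim exE conjE)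
  have "(v, z) \<notin> R" if "v \<in> set as" for v using that z unfolding as(2) by blast
  then show ?case using as z(1) by (intro exI[of _ "z # as"]) auto
qed

lemma two_colorable_topological_lists:
  assumes "oriented_graph VH EH" "two_colorable VH EH"
  obtains A B as bs where "A \<union> B = VH" "A \<inter> B = {}"
    and "distinct as" "set as = A" "sorted_wrt (\<lambda>u v. (v, u) \<notin> EH \<inter> A \<times> A) as"
    and "distinct bs" "set bs = B" "sorted_wrt (\<lambda>u v. (v, u) \<notin> EH \<inter> B \<times> B) bs"
proof -
  obtain A B where AB: "A \<union> B = VH" "A \<inter> B = {}" "acyclic (EH \<inter> A \<times> A)" "acyclic (EH \<inter> B \<times> B)"
    using assms(2) unfolding two_colorable_def by (elim exE conjE)
  have "finite A" "finite B" using assms(1) AB(1) unfolding oriented_graph_def by auto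
  from acyclic_topological_order[OF \<open>finite A\<close> AB(3)] obtain as
    where as: "distinct as" "set as = A" "sorted_wrt (\<lambda>u v. (v, u) \<notin> EH \<inter> A \<times> A) as"
    by (elim exE conjE)
  from acyclic_topological_order[OF \<open>finite B\<close> AB(4)] obtain bs
    where bs: "distinct bs" "set bs = B" "sorted_wrt (\<lambda>u v. (v, u) \<notin> EH \<inter> B \<times> B) bs"
    by (elim exE conjE)
  show ?thesis by (rule that[OF AB(1,2) as bs])
qed

lemma transitive_chain_follows_order:
  assumes "sorted_wrt (\<lambda>u v. (v, u) \<notin> R) as" "\<And>u. (u, u) \<notin> R"
    and "transitive_chain T xs" "length xs = length as"
    and "i < length as" "j < length as" "(as ! i, as ! j) \<in> R"
  shows "(xs ! i, xs ! j) \<in> T"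
proof -
  have "i \<noteq> j" using assms(2,7) by metis
  moreover have "\<not> j < i" using assms(1,5,7) sorted_wrt_nth_less by fastforce
  ultimately have "i < j" by simp
  then show ?thesis
    using assms(3,4,6) unfolding transitive_chain_def by (simp add: sorted_wrt_iff_nth_less)
qed

lemma contains_copy_of_nth:
  assumes "distinct vs" "set vs = VH" "EH \<subseteq> VH \<times> VH"
    and "distinct zs" "length zs = length vs" "set zs \<subseteq> V"
    and "\<And>i j. i < length vs \<Longrightarrow> j < length vs \<Longrightarrow> (vs ! i, vs ! j) \<in> EH \<Longrightarrow> (zs ! i, zs ! j) \<in> T"
  shows "contains_copy V T VH EH"
proof -
  define f where "f v = the (map_of (zip vs zs) v)" for v
  have f_nth: "f (vs ! i) = zs ! i" if "i < length vs" for i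
    using map_of_zip_nth[of vs zs i] assms(1,5) that unfolding f_def by simp
  have "inj_on f VH"
  proof
    fix u v assume "u \<in> VH" "v \<in> VH" "f u = f v"
    then obtain i j where "i < length vs" "j < length vs" "u = vs ! i" "v = vs ! j" "zs ! i = zs ! j"
      using assms(2) f_nth by (metis in_set_conv_nth)
    then show "u = v" using assms(4,5) nth_eq_iff_index_eq by metis
  qed
  moreover have "f ` VH \<subseteq> V"
  proof
    fix w assume "w \<in> f ` VH"
    then obtain i where "i < length vs" "w = zs ! i"
      using assms(2) f_nth by (auto simp: in_set_conv_nth)
    then show "w \<in> V" using assms(5,6) nth_mem by fastforce
  qed
  moreover have "(f u, f v) \<in> T" if "(u, v) \<in> EH" for u v
  proof -
    have "u \<in> set vs" "v \<in> set vs" using that assms(2,3) by auto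
    then obtain i j where "i < length vs" "j < length vs" "u = vs ! i" "v = vs ! j"
      by (auto simp: in_set_conv_nth)
    then show ?thesis using that assms(7) f_nth by simp
  qed
  ultimately show ?thesis unfolding contains_copy_def by blast
qed

definition cross_pattern :: "(nat \<Rightarrow> nat \<Rightarrow> bool) \<Rightarrow> ('a \<times> 'a) set \<Rightarrow> 'a list \<Rightarrow> 'a list \<Rightarrow> bool" where
  "cross_pattern h T xs ys \<longleftrightarrow> (\<forall>i < length xs. \<forall>k < length ys.
     if h i k then (xs ! i, ys ! k) \<in> T else (ys ! k, xs ! i) \<in> T)"

lemma contains_copy_of_chains:
  assumes "oriented_graph VH EH" "A \<union> B = VH" "A \<inter> B = {}"
    and "distinct as" "set as = A" "sorted_wrt (\<lambda>u v. (v, u) \<notin> EH \<inter> A \<times> A) as"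
    and "distinct bs" "set bs = B" "sorted_wrt (\<lambda>u v. (v, u) \<notin> EH \<inter> B \<times> B) bs"
    and "transitive_chain T xs" "set xs \<subseteq> M" "length xs = length as"
    and "transitive_chain T ys" "set ys \<subseteq> N" "length ys = length bs"
    and "cross_pattern (\<lambda>i k. (as ! i, bs ! k) \<in> EH) T xs ys" "M \<inter> N = {}"
  shows "contains_copy (M \<union> N) T VH EH"
proof (rule contains_copy_of_nth[where vs = "as @ bs" and zs = "xs @ ys"])
  have EV: "EH \<subseteq> VH \<times> VH" and irrefl: "\<And>u. (u, u) \<notin> EH"
    and asym: "\<And>u v. (u, v) \<in> EH \<Longrightarrow> (v, u) \<notin> EH"
    using assms(1) unfolding oriented_graph_def by auto
  from EV show "EH \<subseteq> VH \<times> VH" .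
  show "distinct (as @ bs)" "set (as @ bs) = VH" using assms(2-5,7,8) by auto
  show "distinct (xs @ ys)" "length (xs @ ys) = length (as @ bs)" "set (xs @ ys) \<subseteq> M \<union> N"
    using assms(10-15,17) unfolding transitive_chain_def by auto
  fix i j assume i: "i < length (as @ bs)" and j: "j < length (as @ bs)"
    and e: "((as @ bs) ! i, (as @ bs) ! j) \<in> EH"
  let ?a = "length as"
  have chainA: "(xs ! i', xs ! j') \<in> T" if "i' < ?a" "j' < ?a" "(as ! i', as ! j') \<in> EH" for i' j'
    using transitive_chain_follows_order[OF assms(6) _ assms(10,12)] that assms(5) irrefl by auto
  have chainB: "(ys ! i', ys ! j') \<in> T"
    if "i' < length bs" "j' < length bs" "(bs ! i', bs ! j') \<in> EH" for i' j'
    using transitive_chain_follows_order[OF assms(9) _ assms(13,15)] that assms(8) irrefl by auto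
  have cross: "if (as ! i', bs ! k) \<in> EH then (xs ! i', ys ! k) \<in> T else (ys ! k, xs ! i') \<in> T"
    if "i' < ?a" "k < length bs" for i' k
    using assms(12,15,16) that unfolding cross_pattern_def by auto
  show "((xs @ ys) ! i, (xs @ ys) ! j) \<in> T"
  proof (cases "i < ?a"; cases "j < ?a")
    assume "i < ?a" "j < ?a"
    then show ?thesis using e chainA assms(12) by (simp add: nth_append)
  next
    assume "i < ?a" "\<not> j < ?a"
    then show ?thesis using e cross[of i "j - ?a"] i j assms(12) by (simp add: nth_append)
  next
    assume "\<not> i < ?a" "j < ?a"
    then show ?thesis using e cross[of j "i - ?a"] i j asym assms(12) by (auto simp: nth_append)
  next
    assume "\<not> i < ?a" "\<not> j < ?a"
    then show ?thesis using e chainB[of "i - ?a" "j - ?a"] i j assms(12) by (simp add: nth_append)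
  qed
qed

section \<open>Counting relations\<close>

lemma card_subsets_Un_disjoint:
  assumes "A \<inter> B = {}"
  shows "card {R. R \<subseteq> A \<union> B \<and> P (R \<inter> A) \<and> Q (R \<inter> B)}
       = card {S. S \<subseteq> A \<and> P S} * card {S. S \<subseteq> B \<and> Q S}"
proof -
  have "bij_betw (\<lambda>R. (R \<inter> A, R \<inter> B)) {R. R \<subseteq> A \<union> B \<and> P (R \<inter> A) \<and> Q (R \<inter> B)}
      ({S. S \<subseteq> A \<and> P S} \<times> {S. S \<subseteq> B \<and> Q S})"
  proof (rule bij_betw_byWitness[where f' = "\<lambda>(S1, S2). S1 \<union> S2"], goal_cases)
    case 4
    have "(S1 \<union> S2) \<inter> A = S1 \<and> (S1 \<union> S2) \<inter> B = S2" if "S1 \<subseteq> A" "S2 \<subseteq> B" for S1 S2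
      using that assms by auto
    then show ?case by fastforce
  qed (use assms in auto)
  then show ?thesis by (simp add: bij_betw_same_card card_cartesian_product)
qed

lemma card_subsets_blockwise:
  assumes "finite I" "finite U" "\<And>i. i \<in> I \<Longrightarrow> D i \<subseteq> U" "disjoint_family_on D I"
  shows "card {R. R \<subseteq> U \<and> (\<forall>i\<in>I. P i (R \<inter> D i))}
       = 2 ^ (card U - card (\<Union>i\<in>I. D i)) * (\<Prod>i\<in>I. card {S. S \<subseteq> D i \<and> P i S})"
  using assms
proof (induction I arbitrary: U rule: finite_induct)
  case empty
  have "{R. R \<subseteq> U} = Pow U" by auto
  then show ?case using empty card_Pow by simp
next
  case (insert i I)
  define U' where "U' = U - D i"
  have D_U': "D j \<subseteq> U'" if "j \<in> I" for j
    using insert that unfolding U'_def by (auto simp: disjoint_family_on_insert)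
  have "{R. R \<subseteq> U \<and> (\<forall>j\<in>insert i I. P j (R \<inter> D j))}
      = {R. R \<subseteq> D i \<union> U' \<and> P i (R \<inter> D i) \<and> (\<forall>j\<in>I. P j (R \<inter> U' \<inter> D j))}"
  proof -
    have "R \<inter> U' \<inter> D j = R \<inter> D j" if "j \<in> I" for R j using D_U'[OF that] by auto
    moreover have "D i \<union> U' = U" using insert.prems(2) unfolding U'_def by blast
    ultimately show ?thesis by auto
  qed
  also have "card \<dots> = card {S. S \<subseteq> D i \<and> P i S} * card {R. R \<subseteq> U' \<and> (\<forall>j\<in>I. P j (R \<inter> D j))}"
    by (rule card_subsets_Un_disjoint) (auto simp: U'_def)
  also have "card {R. R \<subseteq> U' \<and> (\<forall>j\<in>I. P j (R \<inter> D j))}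
      = 2 ^ (card U' - card (\<Union>j\<in>I. D j)) * (\<Prod>j\<in>I. card {S. S \<subseteq> D j \<and> P j S})"
    using insert D_U' by (auto simp: U'_def disjoint_family_on_insert)
  finally have "card {R. R \<subseteq> U \<and> (\<forall>j\<in>insert i I. P j (R \<inter> D j))}
      = card {S. S \<subseteq> D i \<and> P i S} * (2 ^ (card U' - card (\<Union>j\<in>I. D j))
        * (\<Prod>j\<in>I. card {S. S \<subseteq> D j \<and> P j S}))" .
  moreover have fin: "finite (D i)" "finite (\<Union>j\<in>I. D j)"
    using insert.prems(1,2) by (meson finite_subset insertI1 insertI2 UN_least)+
  moreover have "card U' = card U - card (D i)"
    unfolding U'_def using insert.prems(2) fin by (simp add: card_Diff_subset)
  moreover have "card (\<Union>j\<in>insert i I. D j) = card (D i) + card (\<Union>j\<in>I. D j)"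
    using card_Un_disjoint[OF fin] insert by (simp add: disjoint_family_on_insert)
  ultimately show ?case using insert.hyps by (simp add: algebra_simps diff_diff_left)
qed

lemma card_UN_disjoint_const:
  assumes "finite I" "disjoint_family_on D I" "\<And>i. i \<in> I \<Longrightarrow> finite (D i) \<and> card (D i) = k"
  shows "card (\<Union>i\<in>I. D i) = k * card I"
proof -
  have "card (\<Union>i\<in>I. D i) = (\<Sum>i\<in>I. card (D i))"
    using card_UN_disjoint'[OF assms(2) _ assms(1)] assms(3) by blast
  also have "\<dots> = (\<Sum>i\<in>I. k)" using assms(3) by simp
  finally show ?thesis by simp
qed

lemma card_subsets_missing_targets:
  assumes "finite U" "finite I" "disjoint_family_on D I"
    and "\<And>i. i \<in> I \<Longrightarrow> D i \<subseteq> U \<and> card (D i) = k \<and> S i \<subseteq> D i"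
  shows "card {R. R \<subseteq> U \<and> (\<forall>i\<in>I. R \<inter> D i \<noteq> S i)} = 2 ^ (card U - k * card I) * (2 ^ k - 1) ^ card I"
proof -
  have fin: "finite (D i)" if "i \<in> I" for i
    using assms(4)[OF that] finite_subset[OF _ assms(1)] by blast
  have "card {X. X \<subseteq> D i \<and> X \<noteq> S i} = 2 ^ k - 1" if "i \<in> I" for i
  proof -
    have "{X. X \<subseteq> D i \<and> X \<noteq> S i} = Pow (D i) - {S i}" by auto
    then show ?thesis using assms(4)[OF that] fin[OF that] by (simp add: card_Diff_singleton card_Pow)
  qed
  moreover have "card (\<Union>i\<in>I. D i) = k * card I"
    by (rule card_UN_disjoint_const[OF assms(2,3)]) (use assms(4) fin in blast)
  ultimately show ?thesis
    using card_subsets_blockwise[OF assms(2,1), of D "\<lambda>i X. X \<noteq> S i"] assms(3,4) by simp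
qed

lemma exists_subset_meeting_targets:
  assumes "finite U" "finite \<Phi>" "finite I"
    and blocks: "\<And>\<phi> i. \<phi> \<in> \<Phi> \<Longrightarrow> i \<in> I \<Longrightarrow> D \<phi> i \<subseteq> U \<and> card (D \<phi> i) = k \<and> S \<phi> i \<subseteq> D \<phi> i"
    and disj: "\<And>\<phi>. \<phi> \<in> \<Phi> \<Longrightarrow> disjoint_family_on (D \<phi>) I"
    and few: "card \<Phi> * (2 ^ k - 1) ^ card I < 2 ^ (k * card I)"
  shows "\<exists>R \<subseteq> U. \<forall>\<phi> \<in> \<Phi>. \<exists>i \<in> I. R \<inter> D \<phi> i = S \<phi> i"
proof (cases "\<Phi> = {}")
  case True
  then show ?thesis by (intro exI[of _ "{}"]) simp
next
  case False
  define Bad where "Bad \<phi> = {R. R \<subseteq> U \<and> (\<forall>i\<in>I. R \<inter> D \<phi> i \<noteq> S \<phi> i)}" for \<phi>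
  have card_Bad: "card (Bad \<phi>) = 2 ^ (card U - k * card I) * (2 ^ k - 1) ^ card I" if "\<phi> \<in> \<Phi>" for \<phi>
    unfolding Bad_def
    by (rule card_subsets_missing_targets[OF assms(1,3) disj[OF that]]) (use blocks[OF that] in blast)
  obtain \<phi>\<^sub>0 where \<phi>\<^sub>0: "\<phi>\<^sub>0 \<in> \<Phi>" using False by blast
  have "finite (D \<phi>\<^sub>0 i) \<and> card (D \<phi>\<^sub>0 i) = k" if "i \<in> I" for i
    using blocks[OF \<phi>\<^sub>0 that] finite_subset[OF _ assms(1)] by blast
  then have "card (\<Union>i\<in>I. D \<phi>\<^sub>0 i) = k * card I"
    by (rule card_UN_disjoint_const[OF assms(3) disj[OF \<phi>\<^sub>0]])
  moreover have "(\<Union>i\<in>I. D \<phi>\<^sub>0 i) \<subseteq> U" using blocks[OF \<phi>\<^sub>0] by blast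
  ultimately have kI: "k * card I \<le> card U" using card_mono[OF assms(1)] by metis
  have "card (\<Union>\<phi>\<in>\<Phi>. Bad \<phi>) \<le> (\<Sum>\<phi>\<in>\<Phi>. card (Bad \<phi>))"
    by (rule card_UN_le[OF assms(2)])
  also have "\<dots> = 2 ^ (card U - k * card I) * (card \<Phi> * (2 ^ k - 1) ^ card I)"
    using card_Bad by simp
  also have "\<dots> < 2 ^ (card U - k * card I) * 2 ^ (k * card I)"
    using few by simp
  also have "\<dots> = card (Pow U)"
    using kI assms(1) by (simp add: card_Pow flip: power_add)
  finally have "(\<Union>\<phi>\<in>\<Phi>. Bad \<phi>) \<noteq> Pow U" by auto
  moreover have "(\<Union>\<phi>\<in>\<Phi>. Bad \<phi>) \<subseteq> Pow U" unfolding Bad_def by auto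
  ultimately have "(\<Union>\<phi>\<in>\<Phi>. Bad \<phi>) \<subset> Pow U" by (simp add: psubset_eq)
  from psubset_imp_ex_mem[OF this] obtain R where "R \<in> Pow U - (\<Union>\<phi>\<in>\<Phi>. Bad \<phi>)" ..
  then have R: "R \<subseteq> U" "\<And>\<phi>. \<phi> \<in> \<Phi> \<Longrightarrow> R \<notin> Bad \<phi>" by auto
  show ?thesis
  proof (intro exI[of _ R] conjI ballI)
    show "R \<subseteq> U" by (fact R(1))
    fix \<phi> assume "\<phi> \<in> \<Phi>"
    then show "\<exists>i\<in>I. R \<inter> D \<phi> i = S \<phi> i" using R unfolding Bad_def by blast
  qed
qed

lemma pow_mul_add_le_Suc_pow_mul: "(d::nat) ^ n * (d + n) \<le> (d + 1) ^ n * d"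
proof (induction n)
  case 0
  then show ?case by simp
next
  case (Suc n)
  have "d ^ Suc n * (d + Suc n) \<le> (d + 1) * (d ^ n * (d + n))"
    by (simp add: algebra_simps)
  also have "\<dots> \<le> (d + 1) * ((d + 1) ^ n * d)"
    using Suc.IH by (rule mult_left_mono) simp
  finally show ?case by (simp add: algebra_simps)
qed

(* (1 - 1/c)^c <= 1/2, cleared of denominators *)
lemma two_mul_pred_pow_le_pow:
  assumes "1 \<le> (c::nat)"
  shows "2 * (c - 1) ^ c \<le> c ^ c"
proof -
  obtain d where c: "c = d + 1" using assms by (metis add.commute le_Suc_ex)
  have "(2 * d ^ (d + 1)) * d \<le> d ^ (d + 1) * (d + (d + 1))"
    by (simp add: algebra_simps)
  also have "\<dots> \<le> (d + 1) ^ (d + 1) * d"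
    by (rule pow_mul_add_le_Suc_pow_mul)
  finally show ?thesis using c by (cases "d = 0") auto
qed

lemma two_pow_mul_pred_pow_less:
  assumes "1 \<le> (c::nat)" "p = c * (X + 1)"
  shows "2 ^ (X * p) * (c - 1) ^ (p * p) < c ^ (p * p)"
proof -
  have pp: "p * p = c * ((X + 1) * p)" using assms(2) by (simp add: algebra_simps)
  have "(2 * (c - 1) ^ c) ^ ((X + 1) * p) \<le> (c ^ c) ^ ((X + 1) * p)"
    using two_mul_pred_pow_le_pow[OF assms(1)] by (rule power_mono) simp
  then have le: "2 ^ ((X + 1) * p) * (c - 1) ^ (p * p) \<le> c ^ (p * p)"
    unfolding pp by (simp add: power_mult power_mult_distrib)
  have lt: "(2::nat) ^ (X * p) < 2 ^ ((X + 1) * p)"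
    using assms by simp
  show ?thesis
  proof (cases "(c - 1) ^ (p * p) = 0")
    case True
    then show ?thesis using assms(1) by simp
  next
    case False
    then have "2 ^ (X * p) * (c - 1) ^ (p * p) < 2 ^ ((X + 1) * p) * (c - 1) ^ (p * p)"
      using lt by simp
    with le show ?thesis by linarith
  qed
qed

lemma disjoint_family_on_subset:
  assumes "disjoint_family_on F A" "\<And>i. i \<in> A \<Longrightarrow> F' i \<subseteq> F i"
  shows "disjoint_family_on F' A"
  using assms unfolding disjoint_family_on_def by blast

lemma disjoint_family_on_Times:
  assumes "disjoint_family_on F A" "disjoint_family_on G B"
  shows "disjoint_family_on (\<lambda>i. F (fst i) \<times> G (snd i)) (A \<times> B)"
  using assms unfolding disjoint_family_on_def by fastforce

section \<open>A bipartite tournament forcing a cross pattern\<close>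

definition pattern_rel :: "(nat \<Rightarrow> nat \<Rightarrow> bool) \<Rightarrow> 'a list \<Rightarrow> 'b list \<Rightarrow> ('a \<times> 'b) set" where
  "pattern_rel h xs ys = {(xs ! i, ys ! k) | i k. i < length xs \<and> k < length ys \<and> h i k}"

lemma pattern_rel_subset: "pattern_rel h xs ys \<subseteq> set xs \<times> set ys"
  unfolding pattern_rel_def by auto

lemma nth_mem_pattern_rel_iff:
  assumes "distinct xs" "distinct ys" "i < length xs" "k < length ys"
  shows "(xs ! i, ys ! k) \<in> pattern_rel h xs ys \<longleftrightarrow> h i k"
  using assms unfolding pattern_rel_def by (auto simp: nth_eq_iff_index_eq)

definition chains_in :: "'a set \<Rightarrow> nat \<Rightarrow> 'a list set" where
  "chains_in B k = {xs. distinct xs \<and> set xs \<subseteq> B \<and> length xs = k}"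

lemma finite_chains_in: "finite B \<Longrightarrow> finite (chains_in B k)"
  unfolding chains_in_def
  by (rule finite_subset[OF _ finite_lists_length_eq[of B k]]) auto

lemma card_chains_in_le: "finite B \<Longrightarrow> card (chains_in B k) \<le> card B ^ k"
  unfolding chains_in_def
  using card_mono[OF finite_lists_length_eq[of B k], of "{xs. distinct xs \<and> set xs \<subseteq> B \<and> length xs = k}"]
  by (auto simp: card_lists_length_eq)

lemma card_PiE_chains_in_le:
  assumes "finite G" "\<And>g. g \<in> G \<Longrightarrow> finite (B g) \<and> card (B g) \<le> n"
  shows "card (\<Pi>\<^sub>E g\<in>G. chains_in (B g) k) \<le> n ^ (k * card G)"
proof -
  have "card (\<Pi>\<^sub>E g\<in>G. chains_in (B g) k) \<le> (\<Prod>g\<in>G. n ^ k)"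
    unfolding card_PiE[OF assms(1)] using assms(2)
    by (intro prod_mono) (auto intro: order_trans[OF card_chains_in_le] power_mono)
  then show ?thesis by (simp add: power_mult)
qed

lemma chain_products_in_blocks:
  assumes cx: "cx \<in> (\<Pi>\<^sub>E g\<in>G. chains_in (BM g) a)" and cy: "cy \<in> (\<Pi>\<^sub>E j\<in>J. chains_in (BN j) b)"
  shows "disjoint_family_on BM G \<Longrightarrow> disjoint_family_on BN J \<Longrightarrow>
      disjoint_family_on (\<lambda>i. set (cx (fst i)) \<times> set (cy (snd i))) (G \<times> J)"
    and "i \<in> G \<times> J \<Longrightarrow> set (cx (fst i)) \<times> set (cy (snd i)) \<subseteq> BM (fst i) \<times> BN (snd i)"
    and "i \<in> G \<times> J \<Longrightarrow> card (set (cx (fst i)) \<times> set (cy (snd i))) = a * b"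
proof -
  have x: "distinct (cx g) \<and> set (cx g) \<subseteq> BM g \<and> length (cx g) = a" if "g \<in> G" for g
    using PiE_mem[OF cx that] unfolding chains_in_def by simp
  have y: "distinct (cy j) \<and> set (cy j) \<subseteq> BN j \<and> length (cy j) = b" if "j \<in> J" for j
    using PiE_mem[OF cy that] unfolding chains_in_def by simp
  show "disjoint_family_on (\<lambda>i. set (cx (fst i)) \<times> set (cy (snd i))) (G \<times> J)"
    if "disjoint_family_on BM G" "disjoint_family_on BN J"
  proof (rule disjoint_family_on_Times)
    show "disjoint_family_on (\<lambda>g. set (cx g)) G"
      by (rule disjoint_family_on_subset[OF that(1)]) (use x in blast)
    show "disjoint_family_on (\<lambda>j. set (cy j)) J"
      by (rule disjoint_family_on_subset[OF that(2)]) (use y in blast)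
  qed
  show "set (cx (fst i)) \<times> set (cy (snd i)) \<subseteq> BM (fst i) \<times> BN (snd i)" if "i \<in> G \<times> J"
    using x[of "fst i"] y[of "snd i"] that by auto
  show "card (set (cx (fst i)) \<times> set (cy (snd i))) = a * b" if "i \<in> G \<times> J"
    using x[of "fst i"] y[of "snd i"] that by (auto simp: card_cartesian_product distinct_card)
qed

lemma card_chain_choices_union_bound:
  assumes "p = 2 ^ (a * b) * (a * a + b * b + 1)"
    and "\<forall>g<p. finite (BM g) \<and> card (BM g) = 2 ^ a" "\<forall>j<p. finite (BN j) \<and> card (BN j) = 2 ^ b"
  shows "card ((\<Pi>\<^sub>E g\<in>{..<p}. chains_in (BM g) a) \<times> (\<Pi>\<^sub>E j\<in>{..<p}. chains_in (BN j) b))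
      * (2 ^ (a * b) - 1) ^ (p * p) < 2 ^ (a * b * (p * p))"
proof -
  let ?\<Phi> = "(\<Pi>\<^sub>E g\<in>{..<p}. chains_in (BM g) a) \<times> (\<Pi>\<^sub>E j\<in>{..<p}. chains_in (BN j) b)"
  have "card ?\<Phi> \<le> (2 ^ a) ^ (a * card {..<p}) * (2 ^ b) ^ (b * card {..<p})"
    unfolding card_cartesian_product
    using assms(2,3) by (intro mult_le_mono card_PiE_chains_in_le) auto
  then have "card ?\<Phi> * (2 ^ (a * b) - 1) ^ (p * p) \<le> 2 ^ ((a * a + b * b) * p) * (2 ^ (a * b) - 1) ^ (p * p)"
    by (simp add: power_add add_mult_distrib mult.assoc flip: power_mult)
  also have "\<dots> < (2 ^ (a * b)) ^ (p * p)"
    by (rule two_pow_mul_pred_pow_less) (simp_all add: assms(1))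
  finally show ?thesis by (simp add: power_mult)
qed

lemma exists_relation_meeting_chain_patterns:
  fixes BM :: "nat \<Rightarrow> 'a set" and BN :: "nat \<Rightarrow> 'b set"
  assumes p: "p = 2 ^ (a * b) * (a * a + b * b + 1)"
    and "finite M" "finite N"
    and BM: "\<forall>g<p. BM g \<subseteq> M \<and> card (BM g) = 2 ^ a"
    and BN: "\<forall>j<p. BN j \<subseteq> N \<and> card (BN j) = 2 ^ b"
    and disjM: "disjoint_family_on BM {..<p}" and disjN: "disjoint_family_on BN {..<p}"
  shows "\<exists>R \<subseteq> M \<times> N. \<forall>cx \<in> (\<Pi>\<^sub>E g\<in>{..<p}. chains_in (BM g) a). \<forall>cy \<in> (\<Pi>\<^sub>E j\<in>{..<p}. chains_in (BN j) b).
           \<exists>g<p. \<exists>j<p. R \<inter> (set (cx g) \<times> set (cy j)) = pattern_rel h (cx g) (cy j)"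
proof -
  define \<Phi> where "\<Phi> = (\<Pi>\<^sub>E g\<in>{..<p}. chains_in (BM g) a) \<times> (\<Pi>\<^sub>E j\<in>{..<p}. chains_in (BN j) b)"
  define I where "I = {..<p} \<times> {..<p}"
  define D where "D \<phi> i = set (fst \<phi> (fst i)) \<times> set (snd \<phi> (snd i))"
    for \<phi> :: "(nat \<Rightarrow> 'a list) \<times> (nat \<Rightarrow> 'b list)" and i :: "nat \<times> nat"
  define S where "S \<phi> i = pattern_rel h (fst \<phi> (fst i)) (snd \<phi> (snd i))"
    for \<phi> :: "(nat \<Rightarrow> 'a list) \<times> (nat \<Rightarrow> 'b list)" and i :: "nat \<times> nat"
  have choice: "fst \<phi> \<in> (\<Pi>\<^sub>E g\<in>{..<p}. chains_in (BM g) a)" "snd \<phi> \<in> (\<Pi>\<^sub>E j\<in>{..<p}. chains_in (BN j) b)"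
    if "\<phi> \<in> \<Phi>" for \<phi>
    using that unfolding \<Phi>_def by (simp_all add: mem_Times_iff)
  have fin_BM: "\<forall>g<p. finite (BM g) \<and> card (BM g) = 2 ^ a" using BM assms(2) by (meson finite_subset)
  have fin_BN: "\<forall>j<p. finite (BN j) \<and> card (BN j) = 2 ^ b" using BN assms(3) by (meson finite_subset)
  have "\<exists>R \<subseteq> M \<times> N. \<forall>\<phi> \<in> \<Phi>. \<exists>i \<in> I. R \<inter> D \<phi> i = S \<phi> i"
  proof (rule exists_subset_meeting_targets)
    show "finite (M \<times> N)" "finite I" using assms(2,3) unfolding I_def by auto
    show "finite \<Phi>"
      unfolding \<Phi>_def using fin_BM fin_BN by (auto intro!: finite_PiE finite_chains_in)
    show "D \<phi> i \<subseteq> M \<times> N \<and> card (D \<phi> i) = a * b \<and> S \<phi> i \<subseteq> D \<phi> i"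
      if "\<phi> \<in> \<Phi>" "i \<in> I" for \<phi> i
    proof -
      have "fst i < p" "snd i < p" using that(2) unfolding I_def by auto
      then have "BM (fst i) \<times> BN (snd i) \<subseteq> M \<times> N" using BM BN by blast
      then show ?thesis
        using chain_products_in_blocks(2,3)[OF choice[OF that(1)] that(2)[unfolded I_def]] pattern_rel_subset
        unfolding D_def S_def by blast
    qed
    show "disjoint_family_on (D \<phi>) I" if "\<phi> \<in> \<Phi>" for \<phi>
      unfolding D_def I_def by (rule chain_products_in_blocks(1)[OF choice[OF that] disjM disjN])
    show "card \<Phi> * (2 ^ (a * b) - 1) ^ card I < 2 ^ (a * b * card I)"
      using card_chain_choices_union_bound[OF p fin_BM fin_BN] unfolding \<Phi>_def I_def by simp
  qed
  then obtain R where R: "R \<subseteq> M \<times> N" "\<forall>\<phi> \<in> \<Phi>. \<exists>i \<in> I. R \<inter> D \<phi> i = S \<phi> i"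
    by (elim exE conjE)
  show ?thesis
  proof (intro exI[of _ R] conjI ballI)
    show "R \<subseteq> M \<times> N" by (fact R(1))
    fix cx cy
    assume "cx \<in> (\<Pi>\<^sub>E g\<in>{..<p}. chains_in (BM g) a)" "cy \<in> (\<Pi>\<^sub>E j\<in>{..<p}. chains_in (BN j) b)"
    then have "(cx, cy) \<in> \<Phi>" unfolding \<Phi>_def by simp
    with R(2) obtain i where "i \<in> I" "R \<inter> D (cx, cy) i = S (cx, cy) i" by (elim ballE bexE) auto
    then show "\<exists>g<p. \<exists>j<p. R \<inter> (set (cx g) \<times> set (cy j)) = pattern_rel h (cx g) (cy j)"
      unfolding I_def D_def S_def by (cases i) auto
  qed
qed

lemma tournament_chains_in_blocks:
  assumes "tournament V T" "\<And>g. g \<in> G \<Longrightarrow> B g \<subseteq> V \<and> 2 ^ k \<le> card (B g)"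
  shows "\<exists>c \<in> (\<Pi>\<^sub>E g\<in>G. chains_in (B g) k). \<forall>g\<in>G. transitive_chain T (c g)"
proof -
  have "\<exists>xs. xs \<in> chains_in (B g) k \<and> transitive_chain T xs" if "g \<in> G" for g
  proof -
    have "finite (B g)" using assms that finite_subset unfolding tournament_def oriented_graph_def by metis
    then show ?thesis
      using exists_transitive_chain[of "B g" k T] assms that
      unfolding tournament_def chains_in_def transitive_chain_def by blast
  qed
  then obtain c where "\<forall>g\<in>G. c g \<in> chains_in (B g) k \<and> transitive_chain T (c g)" by metis
  then show ?thesis by (intro bexI[of _ "restrict c G"]) auto
qed

definition bipartite_orientation :: "'a set \<Rightarrow> 'a set \<Rightarrow> ('a \<times> 'a) set \<Rightarrow> ('a \<times> 'a) set" where
  "bipartite_orientation M N R = R \<union> {(y, x). x \<in> M \<and> y \<in> N \<and> (x, y) \<notin> R}"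

lemma bipartite_tournament_orientation:
  assumes "finite M" "finite N" "M \<inter> N = {}" "R \<subseteq> M \<times> N"
  shows "bipartite_tournament M N (bipartite_orientation M N R)"
  using assms unfolding bipartite_tournament_def bipartite_orientation_def by auto

lemma completion_orientation_cross_pattern:
  assumes "completion M N (bipartite_orientation M N R) T"
    and "distinct xs" "set xs \<subseteq> M" "distinct ys" "set ys \<subseteq> N"
    and "R \<inter> (set xs \<times> set ys) = pattern_rel h xs ys"
  shows "cross_pattern h T xs ys"
  unfolding cross_pattern_def
proof (intro allI impI)
  fix i k assume "i < length xs" "k < length ys"
  then have "(xs ! i, ys ! k) \<in> R \<longleftrightarrow> h i k" "xs ! i \<in> M" "ys ! k \<in> N"
    using assms(2-6) nth_mem_pattern_rel_iff[of xs ys i k h] by auto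
  moreover have "bipartite_orientation M N R \<subseteq> T" using assms(1) unfolding completion_def by blast
  ultimately show "if h i k then (xs ! i, ys ! k) \<in> T else (ys ! k, xs ! i) \<in> T"
    unfolding bipartite_orientation_def by auto
qed

lemma completion_contains_cross_pattern:
  assumes T: "completion M N (bipartite_orientation M N R) T"
    and BM: "\<forall>g<p. BM g \<subseteq> M \<and> card (BM g) = 2 ^ a"
    and BN: "\<forall>j<p. BN j \<subseteq> N \<and> card (BN j) = 2 ^ b"
    and meets: "\<forall>cx \<in> (\<Pi>\<^sub>E g\<in>{..<p}. chains_in (BM g) a). \<forall>cy \<in> (\<Pi>\<^sub>E j\<in>{..<p}. chains_in (BN j) b).
      \<exists>g<p. \<exists>j<p. R \<inter> (set (cx g) \<times> set (cy j)) = pattern_rel h (cx g) (cy j)"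
  shows "\<exists>xs ys. transitive_chain T xs \<and> set xs \<subseteq> M \<and> length xs = a \<and>
    transitive_chain T ys \<and> set ys \<subseteq> N \<and> length ys = b \<and> cross_pattern h T xs ys"
proof -
  have tour: "tournament (M \<union> N) T" using T unfolding completion_def by blast
  obtain cx where cx: "cx \<in> (\<Pi>\<^sub>E g\<in>{..<p}. chains_in (BM g) a)" "\<forall>g<p. transitive_chain T (cx g)"
    using tournament_chains_in_blocks[OF tour, of "{..<p}" BM a] BM by fastforce
  obtain cy where cy: "cy \<in> (\<Pi>\<^sub>E j\<in>{..<p}. chains_in (BN j) b)" "\<forall>j<p. transitive_chain T (cy j)"
    using tournament_chains_in_blocks[OF tour, of "{..<p}" BN b] BN by fastforce
  from meets[rule_format, OF cx(1) cy(1)] obtain g j where "g < p" "j < p"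
    and pat: "R \<inter> (set (cx g) \<times> set (cy j)) = pattern_rel h (cx g) (cy j)"
    by (elim exE conjE)
  have xs: "distinct (cx g)" "set (cx g) \<subseteq> M" "length (cx g) = a"
    using PiE_mem[OF cx(1), of g] BM \<open>g < p\<close> unfolding chains_in_def by auto
  have ys: "distinct (cy j)" "set (cy j) \<subseteq> N" "length (cy j) = b"
    using PiE_mem[OF cy(1), of j] BN \<open>j < p\<close> unfolding chains_in_def by auto
  have "cross_pattern h T (cx g) (cy j)"
    using completion_orientation_cross_pattern[OF T xs(1,2) ys(1,2) pat] .
  then show ?thesis
    using xs ys cx(2) cy(2) \<open>g < p\<close> \<open>j < p\<close>
    by (intro exI[of _ "cx g"] exI[of _ "cy j"]) simp
qed

lemma disjoint_family_on_interval_blocks: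
  "disjoint_family_on (\<lambda>g. {s + g * w..<s + Suc g * w}) A"
  unfolding disjoint_family_on_def
proof (intro ballI impI)
  fix g g' :: nat assume "g \<noteq> g'"
  have "(x - s) div w = g" if "x \<in> {s + g * w..<s + Suc g * w}" for x g
    using that by (intro div_nat_eqI) (auto simp: mult.commute)
  then show "{s + g * w..<s + Suc g * w} \<inter> {s + g' * w..<s + Suc g' * w} = {}"
    using \<open>g \<noteq> g'\<close> by blast
qed

lemma exists_disjoint_blocks:
  fixes p u v :: nat
  shows "\<exists>(M :: nat set) N BM BN. finite M \<and> finite N \<and> M \<inter> N = {} \<and>
     (\<forall>g<p. BM g \<subseteq> M \<and> card (BM g) = u) \<and> (\<forall>j<p. BN j \<subseteq> N \<and> card (BN j) = v) \<and>
     disjoint_family_on BM {..<p} \<and> disjoint_family_on BN {..<p}"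
proof -
  define m where "m = p * u"
  have BM: "\<forall>g<p. {g * u..<Suc g * u} \<subseteq> {..<m} \<and> card {g * u..<Suc g * u} = u"
  proof (intro allI impI)
    fix g assume "g < p"
    then have "Suc g * u \<le> m" unfolding m_def by (intro mult_le_mono1) simp
    then show "{g * u..<Suc g * u} \<subseteq> {..<m} \<and> card {g * u..<Suc g * u} = u" by auto
  qed
  have BN: "\<forall>j<p. {m + j * v..<m + Suc j * v} \<subseteq> {m..<m + p * v} \<and> card {m + j * v..<m + Suc j * v} = v"
  proof (intro allI impI)
    fix j assume "j < p"
    then have "Suc j * v \<le> p * v" by (intro mult_le_mono1) simp
    then show "{m + j * v..<m + Suc j * v} \<subseteq> {m..<m + p * v} \<and> card {m + j * v..<m + Suc j * v} = v"
      by auto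
  qed
  have "disjoint_family_on (\<lambda>g. {g * u..<Suc g * u}) {..<p}"
    using disjoint_family_on_interval_blocks[of 0 u] by simp
  moreover have "disjoint_family_on (\<lambda>j. {m + j * v..<m + Suc j * v}) {..<p}"
    by (rule disjoint_family_on_interval_blocks)
  ultimately show ?thesis
    using BM BN by (intro exI[of _ "{..<m}"] exI[of _ "{m..<m + p * v}"]
      exI[of _ "\<lambda>g. {g * u..<Suc g * u}"] exI[of _ "\<lambda>j. {m + j * v..<m + Suc j * v}"]) auto
qed

lemma bipartite_tournament_forcing_cross_pattern:
  fixes a b :: nat and h :: "nat \<Rightarrow> nat \<Rightarrow> bool"
  shows "\<exists>(M :: nat set) N E. bipartite_tournament M N E \<and> (\<forall>T. completion M N E T \<longrightarrow>
     (\<exists>xs ys. transitive_chain T xs \<and> set xs \<subseteq> M \<and> length xs = a \<and>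
              transitive_chain T ys \<and> set ys \<subseteq> N \<and> length ys = b \<and> cross_pattern h T xs ys))"
proof -
  define p where "p = 2 ^ (a * b) * (a * a + b * b + 1)"
  obtain M :: "nat set" and N BM BN where MN: "finite M" "finite N" "M \<inter> N = {}"
    and BM: "\<forall>g<p. BM g \<subseteq> M \<and> card (BM g) = 2 ^ a"
    and BN: "\<forall>j<p. BN j \<subseteq> N \<and> card (BN j) = 2 ^ b"
    and disj: "disjoint_family_on BM {..<p}" "disjoint_family_on BN {..<p}"
    using exists_disjoint_blocks[of p "2 ^ a" "2 ^ b"] by (elim exE conjE)
  from exists_relation_meeting_chain_patterns[where h = h, OF p_def MN(1,2) BM BN disj]
  obtain R where R: "R \<subseteq> M \<times> N" and meets: "\<forall>cx \<in> (\<Pi>\<^sub>E g\<in>{..<p}. chains_in (BM g) a).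
      \<forall>cy \<in> (\<Pi>\<^sub>E j\<in>{..<p}. chains_in (BN j) b).
      \<exists>g<p. \<exists>j<p. R \<inter> (set (cx g) \<times> set (cy j)) = pattern_rel h (cx g) (cy j)"
    by (elim exE conjE)
  define E where "E = bipartite_orientation M N R"
  have "bipartite_tournament M N E"
    unfolding E_def by (rule bipartite_tournament_orientation[OF MN R])
  moreover have "\<exists>xs ys. transitive_chain T xs \<and> set xs \<subseteq> M \<and> length xs = a \<and>
      transitive_chain T ys \<and> set ys \<subseteq> N \<and> length ys = b \<and> cross_pattern h T xs ys"
    if "completion M N E T" for T
    using that BM BN meets unfolding E_def by (rule completion_contains_cross_pattern)
  ultimately show ?thesis by blast
qed

theorem lemma3p4:
  fixes VH :: "'a set" and EH :: "('a \<times> 'a) set"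
  assumes "oriented_graph VH EH" and "two_colorable VH EH"
  shows "\<exists>(M :: nat set) N E. bipartite_tournament M N E \<and> forces M N E VH EH"
proof -
  obtain A B as bs where AB: "A \<union> B = VH" "A \<inter> B = {}"
    and as: "distinct as" "set as = A" "sorted_wrt (\<lambda>u v. (v, u) \<notin> EH \<inter> A \<times> A) as"
    and bs: "distinct bs" "set bs = B" "sorted_wrt (\<lambda>u v. (v, u) \<notin> EH \<inter> B \<times> B) bs"
    by (rule two_colorable_topological_lists[OF assms])
  obtain M :: "nat set" and N E where bt: "bipartite_tournament M N E" and
    forced: "\<forall>T. completion M N E T \<longrightarrow> (\<exists>xs ys.
       transitive_chain T xs \<and> set xs \<subseteq> M \<and> length xs = length as \<and>
       transitive_chain T ys \<and> set ys \<subseteq> N \<and> length ys = length bs \<and>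
       cross_pattern (\<lambda>i k. (as ! i, bs ! k) \<in> EH) T xs ys)"
    using bipartite_tournament_forcing_cross_pattern[of "length as" "length bs" "\<lambda>i k. (as ! i, bs ! k) \<in> EH"]
    by (elim exE conjE)
  have MN: "M \<inter> N = {}" using bt unfolding bipartite_tournament_def by simp
  have "contains_copy (M \<union> N) T VH EH" if "completion M N E T" for T
  proof -
    from forced[rule_format, OF that] obtain xs ys where chains:
      "transitive_chain T xs" "set xs \<subseteq> M" "length xs = length as"
      "transitive_chain T ys" "set ys \<subseteq> N" "length ys = length bs"
      "cross_pattern (\<lambda>i k. (as ! i, bs ! k) \<in> EH) T xs ys"
      by (elim exE conjE)
    show ?thesis by (rule contains_copy_of_chains[OF assms(1) AB as bs chains MN])
  qed
  with bt show ?thesis unfolding forces_def by blast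
qed

end
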